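(* Let $X$ be a Peano continuum and $f:X\to X$ a cw-expansive homeomorphism with cw-expansivity constant $\alpha>0$. Then a point $x\in X$ is a sink if and only if $CW^s_{\alpha/2}(x)$ is a neighborhood of $x$.
   Context: A Peano continuum is a compact, connected, locally connected metric space $(X,d)$ with more than one point. A homeomorphism $f:X\to X$ of a compact metric space is continuum-wise expansive (cw-expansive) with cw-expansivity constant $\alpha>0$ if $\sup_{n\in\mathbb Z}\operatorname{diam} f^n(C)>\alpha$ for every continuum $C\subset X$ containing more than one point. For $\varepsilon>0$ and $x\in X$: $W^s_\varepsilon(x)=\{y\in X:\ d(f^n(x),f^n(y))\le\varepsilon \text{ for all } n\ge 0\}$; $CW^s_\varepsilon(x)$ is the connected component of $W^s_\varepsilon(x)$ containing $x$; $W^s(x)=\{y\in X:\ d(f^n(x),f^n(y))\to 0 \text{ as } n\to\infty\}$. A point $x$ is a weak sink if $W^s_\varepsilon(x)$ is a neighborhood of $x$ for every $\varepsilon>0$; $x$ is a sink if it is a weak sink and there exists $\varepsilon>0$ with $W^s_\varepsilon(x)\subset W^s(x)$. (Sinks are not required to be periodic.) *)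

theory Defs
  imports "HOL-Analysis.Analysis"
begin

text \<open>Peano continuum: compact, connected, locally connected metric space with more than one point.
  The space X is represented as a subset S of a metric space type with the induced metric.\<close>
definition peano_continuum :: "'a::metric_space set \<Rightarrow> bool" where
  "peano_continuum S \<longleftrightarrow> compact S \<and> connected S \<and> locally connected S \<and>
     (\<exists>x\<in>S. \<exists>y\<in>S. x \<noteq> y)"

definition iter_int :: "'a set \<Rightarrow> ('a \<Rightarrow> 'a) \<Rightarrow> int \<Rightarrow> 'a \<Rightarrow> 'a" where
  "iter_int S f n = (if 0 \<le> n then f ^^ nat n else (inv_into S f) ^^ nat (- n))"

definition cw_expansive :: "'a::metric_space set \<Rightarrow> ('a \<Rightarrow> 'a) \<Rightarrow> real \<Rightarrow> bool" where
  "cw_expansive S f \<alpha> \<longleftrightarrow> \<alpha> > 0 \<and>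
     (\<forall>C. C \<subseteq> S \<and> compact C \<and> connected C \<and> (\<exists>x\<in>C. \<exists>y\<in>C. x \<noteq> y) \<longrightarrow>
        (SUP n::int. diameter (iter_int S f n ` C)) > \<alpha>)"

definition local_stable_set :: "'a::metric_space set \<Rightarrow> ('a \<Rightarrow> 'a) \<Rightarrow> real \<Rightarrow> 'a \<Rightarrow> 'a set" where
  "local_stable_set S f \<epsilon> x = {y \<in> S. \<forall>n::nat. dist ((f ^^ n) x) ((f ^^ n) y) \<le> \<epsilon>}"

definition cw_local_stable_set :: "'a::metric_space set \<Rightarrow> ('a \<Rightarrow> 'a) \<Rightarrow> real \<Rightarrow> 'a \<Rightarrow> 'a set" where
  "cw_local_stable_set S f \<epsilon> x = connected_component_set (local_stable_set S f \<epsilon> x) x"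

definition stable_set :: "'a::metric_space set \<Rightarrow> ('a \<Rightarrow> 'a) \<Rightarrow> 'a \<Rightarrow> 'a set" where
  "stable_set S f x = {y \<in> S. (\<lambda>n. dist ((f ^^ n) x) ((f ^^ n) y)) \<longlonglongrightarrow> 0}"

definition nbhd_in :: "'a::topological_space set \<Rightarrow> 'a set \<Rightarrow> 'a \<Rightarrow> bool" where
  "nbhd_in S A x \<longleftrightarrow> (\<exists>U. openin (top_of_set S) U \<and> x \<in> U \<and> U \<subseteq> A)"

definition weak_sink :: "'a::metric_space set \<Rightarrow> ('a \<Rightarrow> 'a) \<Rightarrow> 'a \<Rightarrow> bool" where
  "weak_sink S f x \<longleftrightarrow> (\<forall>\<epsilon>>0. nbhd_in S (local_stable_set S f \<epsilon> x) x)"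

definition sink :: "'a::metric_space set \<Rightarrow> ('a \<Rightarrow> 'a) \<Rightarrow> 'a \<Rightarrow> bool" where
  "sink S f x \<longleftrightarrow> weak_sink S f x \<and>
     (\<exists>\<epsilon>>0. local_stable_set S f \<epsilon> x \<subseteq> stable_set S f x)"

end

theory Submission
  imports Defs
begin

text \<open>If x is a sink, then W^s_(\<alpha>/2)(x) is a neighbourhood of x, and local connectedness
  of X makes its component CW^s_(\<alpha>/2)(x) a neighbourhood too.

  Conversely, let C = CW^s_(\<alpha>/2)(x) be a neighbourhood of x. If d(f^n x, f^n y) did not
  tend to 0 uniformly in y \<in> C, there would be n_k \<rightarrow> \<infinity> and y_k \<in> C with f^(n_k) x \<rightarrow> a
  and f^(n_k) y_k \<rightarrow> b \<noteq> a. The upper Kuratowski limit D of the continua f^(n_k)(C) is a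
  continuum containing a and b. Every point of f^(n_k)(C) stays \<alpha>/2-close to the orbit of
  f^(n_k) x for n_k steps into the past and all steps into the future, so f^j(D) lies in the
  closed \<alpha>/2-ball about f^j(a) for every j \<in> \<int>, contradicting cw-expansivity. Uniform
  attraction of the neighbourhood C then makes x a sink.\<close>

lemma funpow_image_subset: "f ` S \<subseteq> S \<Longrightarrow> (f ^^ n) ` S \<subseteq> S"
  by (induction n) auto

lemma continuous_on_funpow:
  assumes "continuous_on S f" "f ` S \<subseteq> S"
  shows "continuous_on S (f ^^ n)"
proof (induction n)
  case (Suc n)
  then show ?case
    using continuous_on_compose2[OF assms(1) Suc.IH funpow_image_subset[OF assms(2)]] by simp
qed simp

lemma funpow_homeomorphism_cancel:
  assumes "homeomorphism S S f g" "y \<in> S"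
  shows "(g ^^ n) ((f ^^ n) y) = y"
  using assms(2)
proof (induction n arbitrary: y)
  case (Suc n)
  have "f y \<in> S"
    using Suc.prems homeomorphism_image1[OF assms(1)] by blast
  then have "(g ^^ n) ((f ^^ n) (f y)) = f y"
    by (rule Suc.IH)
  then show ?case
    using homeomorphism_apply1[OF assms(1) Suc.prems] by (simp add: funpow_swap1)
qed simp

lemma homeomorphism_inv_into:
  assumes "homeomorphism S T f g" "y \<in> T"
  shows "inv_into S f y = g y"
proof (rule inv_into_f_eq)
  show "inj_on f S"
    using homeomorphism_apply1[OF assms(1)] by (metis inj_on_inverseI)
  show "g y \<in> S" "f (g y) = y"
    using assms by (auto simp: homeomorphism_def)
qed

lemma iter_int_homeomorphism:
  assumes "homeomorphism S S f g" "y \<in> S"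
  shows "iter_int S f j y = (if 0 \<le> j then (f ^^ nat j) y else (g ^^ nat (- j)) y)"
proof -
  have "(inv_into S f ^^ n) y = (g ^^ n) y" for n
  proof (induction n)
    case (Suc n)
    have "(g ^^ n) y \<in> S"
      using funpow_image_subset[of g S n] homeomorphism_image2[OF assms(1)] assms(2) by blast
    then show ?case
      using Suc homeomorphism_inv_into[OF assms(1)] by simp
  qed simp
  then show ?thesis
    by (simp add: iter_int_def)
qed

lemma continuous_on_iter_int:
  assumes "homeomorphism S S f g"
  shows "continuous_on S (iter_int S f j)"
proof -
  have f: "continuous_on S f" "f ` S \<subseteq> S" and g: "continuous_on S g" "g ` S \<subseteq> S"
    using assms by (auto simp: homeomorphism_def)
  have "continuous_on S (\<lambda>y. if 0 \<le> j then (f ^^ nat j) y else (g ^^ nat (- j)) y)"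
    using continuous_on_funpow[OF f] continuous_on_funpow[OF g] by (cases "0 \<le> j") simp_all
  then show ?thesis
    by (rule continuous_on_cong[THEN iffD1, rotated 2])
       (simp_all add: iter_int_homeomorphism[OF assms])
qed

lemma iter_int_funpow:
  assumes "homeomorphism S S f g" "y \<in> S" "0 \<le> int m + j"
  shows "iter_int S f j ((f ^^ m) y) = (f ^^ nat (int m + j)) y"
proof (cases "0 \<le> j")
  case True
  then have "nat (int m + j) = nat j + m"
    by simp
  then show ?thesis
    using True by (simp add: iter_int_def funpow_add)
next
  case False
  define n where "n = nat (- j)"
  define k where "k = nat (int m + j)"
  have "m = n + k"
    using False assms(3) by (simp add: n_def k_def)
  then have "(f ^^ m) y = (f ^^ n) ((f ^^ k) y)"
    by (simp add: funpow_add)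
  moreover have "(f ^^ k) y \<in> S" "(f ^^ m) y \<in> S"
    using funpow_image_subset[of f S] homeomorphism_image1[OF assms(1)] assms(2) by blast+
  ultimately show ?thesis
    using False funpow_homeomorphism_cancel[OF assms(1)]
    by (simp add: iter_int_homeomorphism[OF assms(1)] n_def k_def)
qed

definition kuratowski_limsup :: "(nat \<Rightarrow> 'a::topological_space set) \<Rightarrow> 'a set" where
  "kuratowski_limsup C = (\<Inter>N. closure (\<Union>k\<in>{N..}. C k))"

lemma closed_kuratowski_limsup: "closed (kuratowski_limsup C)"
  by (auto simp: kuratowski_limsup_def)

lemma kuratowski_limsup_subset_closed:
  assumes "closed R" "eventually (\<lambda>k. C k \<subseteq> R) sequentially"
  shows "kuratowski_limsup C \<subseteq> R"
proof -
  obtain N where "\<And>k. k \<ge> N \<Longrightarrow> C k \<subseteq> R"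
    using assms(2) by (auto simp: eventually_sequentially)
  then have "closure (\<Union>k\<in>{N..}. C k) \<subseteq> R"
    by (intro closure_minimal) (use assms(1) in auto)
  then show ?thesis
    unfolding kuratowski_limsup_def by blast
qed

lemma limit_in_kuratowski_limsup:
  assumes "\<And>k. s k \<in> C k" "s \<longlonglongrightarrow> a"
  shows "a \<in> kuratowski_limsup C"
  unfolding kuratowski_limsup_def
proof
  fix N
  have "s k \<in> closure (\<Union>k\<in>{N..}. C k)" if "N \<le> k" for k
    using assms(1) that closure_subset by (meson UN_upper atLeast_iff subsetD)
  then have "eventually (\<lambda>k. s k \<in> closure (\<Union>k\<in>{N..}. C k)) sequentially"
    by (auto simp: eventually_sequentially)
  then show "a \<in> closure (\<Union>k\<in>{N..}. C k)"
    using Lim_in_closed_set[OF closed_closure _ _ assms(2)] by simp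
qed

lemma Pair_in_kuratowski_limsup:
  assumes "s \<longlonglongrightarrow> a" "p \<in> kuratowski_limsup C"
  shows "(a, p) \<in> kuratowski_limsup (\<lambda>k. {s k} \<times> C k)"
  unfolding kuratowski_limsup_def
proof
  fix N
  show "(a, p) \<in> closure (\<Union>k\<in>{N..}. {s k} \<times> C k)"
    unfolding closure_iff_nhds_not_empty
  proof (intro allI impI notI)
    fix W G assume G: "G \<subseteq> W" "open G" "(a, p) \<in> G"
      and disj: "(\<Union>k\<in>{N..}. {s k} \<times> C k) \<inter> W = {}"
    obtain U V where "open U" "open V" "(a, p) \<in> U \<times> V" "U \<times> V \<subseteq> G"
      using open_prod_elim[OF G(2,3)] .
    then have UV: "open U" "open V" "a \<in> U" "p \<in> V" "U \<times> V \<subseteq> W"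
      using G(1) by auto
    obtain M where M: "\<And>k. k \<ge> M \<Longrightarrow> s k \<in> U"
      using topological_tendstoD[OF assms(1) UV(1,3)] by (auto simp: eventually_sequentially)
    have "p \<in> closure (\<Union>k\<in>{max N M..}. C k)"
      using assms(2) by (auto simp: kuratowski_limsup_def)
    then have "V \<inter> (\<Union>k\<in>{max N M..}. C k) \<noteq> {}"
      using UV(2,4) open_Int_closure_eq_empty by blast
    then obtain k q where "k \<ge> max N M" "q \<in> C k" "q \<in> V"
      by blast
    then show False
      using M UV(5) disj by auto
  qed
qed


lemma eventually_subset_open_kuratowski_limsup:
  fixes C :: "nat \<Rightarrow> 'a::t2_space set"
  assumes S: "compact S" and CS: "\<And>k. C k \<subseteq> S"
    and W: "open W" "kuratowski_limsup C \<subseteq> W"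
  shows "eventually (\<lambda>k. C k \<subseteq> W) sequentially"
proof -
  define T where "T N = closure (\<Union>k\<in>{N..}. C k) - W" for N
  have "\<exists>N. T N = {}"
  proof (rule ccontr)
    assume "\<nexists>N. T N = {}"
    then have "(\<Inter>N. T N) \<noteq> {}"
    proof (intro compact_space_imp_nest[of "top_of_set S"])
      show "compact_space (top_of_set S)"
        using S by (simp add: compact_space_subtopology)
      have "closure (\<Union>k\<in>{N..}. C k) \<subseteq> S" for N
        using CS compact_imp_closed[OF S] by (intro closure_minimal) auto
      then show "closedin (top_of_set S) (T N)" for N
        using W(1) by (auto simp: closedin_closed_eq[OF compact_imp_closed[OF S]] T_def)
      show "decseq T"
        unfolding decseq_def T_def by (intro allI impI Diff_mono closure_mono UN_mono) auto
    qed blast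
    then show False
      using W(2) by (auto simp: T_def kuratowski_limsup_def)
  qed
  then obtain N where "T N = {}" ..
  have "C k \<subseteq> W" if "N \<le> k" for k
  proof -
    have "C k \<subseteq> closure (\<Union>k\<in>{N..}. C k)"
      using that by (intro order_trans[OF _ closure_subset]) auto
    then show ?thesis
      using \<open>T N = {}\<close> by (auto simp: T_def)
  qed
  then show ?thesis
    by (auto simp: eventually_sequentially)
qed

lemma connected_kuratowski_limsup:
  fixes C :: "nat \<Rightarrow> 'a::t4_space set"
  assumes S: "compact S" and CS: "\<And>k. C k \<subseteq> S" and conn: "\<And>k. connected (C k)"
    and s: "\<And>k. s k \<in> C k" "s \<longlonglongrightarrow> a"
  shows "connected (kuratowski_limsup C)"
proof -
  define D where "D = kuratowski_limsup C"
  have one_side_empty: "B = {}" if AB: "closed A" "closed B" "A \<union> B = D" "A \<inter> B = {}" "a \<in> A" for A B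
  proof -
    obtain U V where UV: "open U" "open V" "A \<subseteq> U" "B \<subseteq> V" "U \<inter> V = {}"
      using t4_space[OF AB(1,2,4)] by blast
    have "eventually (\<lambda>k. C k \<subseteq> U \<union> V) sequentially"
      using AB(3) UV(1-4) by (intro eventually_subset_open_kuratowski_limsup[OF S CS]) (auto simp: D_def)
    moreover have "eventually (\<lambda>k. s k \<in> U) sequentially"
      using topological_tendstoD[OF s(2) UV(1)] AB(5) UV(3) by blast
    ultimately have "eventually (\<lambda>k. C k \<subseteq> closure U) sequentially"
    proof eventually_elim
      case (elim k)
      then have "C k \<subseteq> U"
        using connectedD[OF conn UV(1,2)] UV(5) s(1)[of k] by blast
      then show ?case
        using closure_subset by blast
    qed
    then have "D \<subseteq> closure U"
      unfolding D_def by (rule kuratowski_limsup_subset_closed[OF closed_closure])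
    then show "B = {}"
      using AB(3) UV(2,4,5) open_Int_closure_eq_empty[OF UV(2), of U] by blast
  qed
  have "a \<in> D"
    unfolding D_def by (rule limit_in_kuratowski_limsup[OF s])
  then show ?thesis
    unfolding D_def[symmetric] connected_closed_set[OF closed_kuratowski_limsup[of C, folded D_def]]
    using one_side_empty one_side_empty[of B A for A B] by (auto simp: Un_commute Int_commute)
qed

lemma diameter_le_if_subset_cball:
  fixes D :: "'a::metric_space set"
  assumes "D \<subseteq> cball c r" "0 \<le> r"
  shows "diameter D \<le> 2 * r"
proof (cases "D = {}")
  case False
  have "dist u v \<le> 2 * r" if "u \<in> D" "v \<in> D" for u v
  proof -
    have "dist c u \<le> r" "dist c v \<le> r"
      using assms(1) that by auto
    then show ?thesis
      using dist_triangle3[of u v c] by linarith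
  qed
  then show ?thesis
    unfolding diameter_def using False by (auto intro!: cSUP_least)
qed (simp add: assms(2))

lemma cw_expansive_trivial_continuum:
  assumes "cw_expansive S f \<alpha>" "D \<subseteq> S" "compact D" "connected D"
    and "\<And>j. diameter (iter_int S f j ` D) \<le> \<alpha>" "a \<in> D" "b \<in> D"
  shows "a = b"
proof (rule ccontr)
  assume "a \<noteq> b"
  then have "(SUP j::int. diameter (iter_int S f j ` D)) > \<alpha>"
    using assms(1-4,6,7) unfolding cw_expansive_def by blast
  moreover have "(SUP j::int. diameter (iter_int S f j ` D)) \<le> \<alpha>"
    by (rule cSUP_least) (use assms(5) in auto)
  ultimately show False
    by simp
qed

lemma iter_int_kuratowski_limsup_stable_images:
  fixes S :: "'a::metric_space set"
  assumes hom: "homeomorphism S S f g" and "closed S" "x \<in> S"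
    and stable: "C \<subseteq> local_stable_set S f \<delta> x"
    and m: "filterlim m at_top sequentially" and a: "(\<lambda>k. (f ^^ m k) x) \<longlonglongrightarrow> a"
    and p: "p \<in> kuratowski_limsup (\<lambda>k. (f ^^ m k) ` C)"
  shows "dist (iter_int S f j a) (iter_int S f j p) \<le> \<delta>"
proof -
  let ?F = "iter_int S f j"
  define R where "R = (S \<times> S) \<inter> (\<lambda>z. dist (?F (fst z)) (?F (snd z))) -` {..\<delta>}"
  have "closed R"
    unfolding R_def
  proof (rule continuous_closed_preimage)
    note F = continuous_on_iter_int[OF hom]
    have "continuous_on (S \<times> S) (\<lambda>z. ?F (fst z))"
      by (rule continuous_on_compose2[OF F continuous_on_fst[OF continuous_on_id]]) auto
    moreover have "continuous_on (S \<times> S) (\<lambda>z. ?F (snd z))"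
      by (rule continuous_on_compose2[OF F continuous_on_snd[OF continuous_on_id]]) auto
    ultimately show "continuous_on (S \<times> S) (\<lambda>z. dist (?F (fst z)) (?F (snd z)))"
      by (rule continuous_on_dist)
  qed (simp_all add: closed_Times \<open>closed S\<close>)
  have "eventually (\<lambda>k. nat \<bar>j\<bar> \<le> m k) sequentially"
    using m by (simp add: filterlim_at_top)
  then have "eventually (\<lambda>k. {(f ^^ m k) x} \<times> (f ^^ m k) ` C \<subseteq> R) sequentially"
  proof (rule eventually_mono)
    fix k assume k: "nat \<bar>j\<bar> \<le> m k"
    have "((f ^^ m k) x, (f ^^ m k) y) \<in> R" if "y \<in> C" for y
    proof -
      have yS: "y \<in> S" and close: "\<And>n. dist ((f ^^ n) x) ((f ^^ n) y) \<le> \<delta>"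
        using stable that by (auto simp: local_stable_set_def)
      have "0 \<le> int (m k) + j"
        using k by linarith
      then show ?thesis
        unfolding R_def
        using funpow_image_subset[OF homeomorphism_image1[OF hom, THEN equalityD1]] yS \<open>x \<in> S\<close>
        by (auto simp: iter_int_funpow[OF hom] close)
    qed
    then show "{(f ^^ m k) x} \<times> (f ^^ m k) ` C \<subseteq> R"
      by auto
  qed
  then have "kuratowski_limsup (\<lambda>k. {(f ^^ m k) x} \<times> (f ^^ m k) ` C) \<subseteq> R"
    by (rule kuratowski_limsup_subset_closed[OF \<open>closed R\<close>])
  moreover have "(a, p) \<in> kuratowski_limsup (\<lambda>k. {(f ^^ m k) x} \<times> (f ^^ m k) ` C)"
    by (rule Pair_in_kuratowski_limsup[OF a p])
  ultimately show ?thesis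
    unfolding R_def by auto
qed

lemma cw_expansive_stable_limits_coincide:
  fixes S :: "'a::metric_space set"
  assumes S: "compact S" and hom: "homeomorphism S S f g" and cw: "cw_expansive S f \<alpha>"
    and C: "connected C" "x \<in> C" "C \<subseteq> local_stable_set S f (\<alpha> / 2) x"
    and m: "filterlim m at_top sequentially" and z: "\<And>k. z k \<in> C"
    and la: "(\<lambda>k. (f ^^ m k) x) \<longlonglongrightarrow> a" and lb: "(\<lambda>k. (f ^^ m k) (z k)) \<longlonglongrightarrow> b"
  shows "a = b"
proof -
  have fS: "f ` S \<subseteq> S"
    using homeomorphism_image1[OF hom] by simp
  have CS: "C \<subseteq> S"
    using C(3) by (auto simp: local_stable_set_def)
  define D where "D = kuratowski_limsup (\<lambda>k. (f ^^ m k) ` C)"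
  have images: "(f ^^ m k) ` C \<subseteq> S" "connected ((f ^^ m k) ` C)" for k
    using funpow_image_subset[OF fS] CS
      connected_continuous_image[OF continuous_on_subset[OF continuous_on_funpow[OF _ fS] CS] C(1)]
      homeomorphism_cont1[OF hom]
    by blast+
  have aD: "a \<in> D"
    unfolding D_def using C(2) by (intro limit_in_kuratowski_limsup[OF _ la]) auto
  have bD: "b \<in> D"
    unfolding D_def using z by (intro limit_in_kuratowski_limsup[OF _ lb]) auto
  have DS: "D \<subseteq> S"
    unfolding D_def using images(1) compact_imp_closed[OF S]
    by (intro kuratowski_limsup_subset_closed) auto
  have "compact (S \<inter> D)"
    by (rule compact_Int_closed[OF S]) (simp add: D_def closed_kuratowski_limsup)
  with DS have "compact D"
    by (simp add: Int_absorb1)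
  moreover have "connected D"
    unfolding D_def using C(2) by (intro connected_kuratowski_limsup[OF S images _ la]) auto
  moreover have "diameter (iter_int S f j ` D) \<le> \<alpha>" for j
  proof -
    have "iter_int S f j ` D \<subseteq> cball (iter_int S f j a) (\<alpha> / 2)"
      using iter_int_kuratowski_limsup_stable_images[OF hom compact_imp_closed[OF S] _ C(3) m la]
        CS C(2) by (auto simp: D_def)
    then show ?thesis
      using diameter_le_if_subset_cball[of _ _ "\<alpha> / 2"] cw by (simp add: cw_expansive_def)
  qed
  ultimately show "a = b"
    using cw_expansive_trivial_continuum[OF cw DS] aD bD by blast
qed

lemma cw_expansive_stable_continuum_shrinks:
  fixes S :: "'a::metric_space set"
  assumes S: "compact S" and hom: "homeomorphism S S f g" and cw: "cw_expansive S f \<alpha>"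
    and C: "connected C" "x \<in> C" "C \<subseteq> local_stable_set S f (\<alpha> / 2) x" and "\<epsilon> > 0"
  shows "\<exists>N. \<forall>n\<ge>N. \<forall>y\<in>C. dist ((f ^^ n) x) ((f ^^ n) y) < \<epsilon>"
proof (rule ccontr)
  assume "\<not> ?thesis"
  then obtain n y where n: "\<And>N. N \<le> n N" and y: "\<And>N. y N \<in> C"
    and far: "\<And>N. \<epsilon> \<le> dist ((f ^^ n N) x) ((f ^^ n N) (y N))"
    by (metis not_le)
  have fS: "f ` S \<subseteq> S"
    using homeomorphism_image1[OF hom] by simp
  have CS: "C \<subseteq> S"
    using C(3) by (auto simp: local_stable_set_def)
  have "((f ^^ n N) x, (f ^^ n N) (y N)) \<in> S \<times> S" for N
    using funpow_image_subset[OF fS] CS C(2) y by blast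
  then obtain l r where "strict_mono r"
    and lim: "((\<lambda>N. ((f ^^ n N) x, (f ^^ n N) (y N))) \<circ> r) \<longlonglongrightarrow> l"
    using compact_imp_seq_compact[OF compact_Times[OF S S]] unfolding seq_compact_def by meson
  obtain a b where l: "l = (a, b)"
    by fastforce
  define m where "m = n \<circ> r"
  have "k \<le> m k" for k
    using n[of "r k"] seq_suble[OF \<open>strict_mono r\<close>, of k] by (simp add: m_def)
  then have m: "filterlim m at_top sequentially"
    by (intro filterlim_at_top_mono[OF filterlim_ident]) auto
  have la: "(\<lambda>k. (f ^^ m k) x) \<longlonglongrightarrow> a" and lb: "(\<lambda>k. (f ^^ m k) (y (r k))) \<longlonglongrightarrow> b"
    using tendsto_fst[OF lim] tendsto_snd[OF lim] by (simp_all add: l m_def o_def)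
  have "\<epsilon> \<le> dist a b"
    using far by (intro LIMSEQ_le_const[OF tendsto_dist[OF la lb]]) (auto simp: m_def)
  moreover have "a = b"
    using cw_expansive_stable_limits_coincide[OF S hom cw C m y la lb] .
  ultimately show False
    using \<open>\<epsilon> > 0\<close> by simp
qed

lemma nbhd_in_connected_component:
  assumes "locally connected S" "nbhd_in S A x"
  shows "nbhd_in S (connected_component_set A x) x"
proof -
  obtain U where U: "openin (top_of_set S) U" "x \<in> U" "U \<subseteq> A"
    using assms(2) by (auto simp: nbhd_in_def)
  then obtain V where V: "openin (top_of_set S) V" "connected V" "x \<in> V" "V \<subseteq> U"
    using assms(1) U(1,2) unfolding locally_connected by blast
  then have "V \<subseteq> connected_component_set A x"
    using U(3) by (intro connected_component_maximal) auto
  with V show ?thesis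
    by (auto simp: nbhd_in_def)
qed

lemma openin_finite_time_stable_set:
  assumes "continuous_on S f" "f ` S \<subseteq> S"
  shows "openin (top_of_set S) {y \<in> S. \<forall>n<N. dist ((f ^^ n) x) ((f ^^ n) y) < \<epsilon>}"
proof (induction N)
  case (Suc N)
  have "{y \<in> S. \<forall>n<Suc N. dist ((f ^^ n) x) ((f ^^ n) y) < \<epsilon>} =
      {y \<in> S. \<forall>n<N. dist ((f ^^ n) x) ((f ^^ n) y) < \<epsilon>} \<inter> (S \<inter> (f ^^ N) -` ball ((f ^^ N) x) \<epsilon>)"
    by (auto simp: less_Suc_eq)
  moreover have "openin (top_of_set S) (S \<inter> (f ^^ N) -` ball ((f ^^ N) x) \<epsilon>)"
    by (rule continuous_openin_preimage_gen[OF continuous_on_funpow[OF assms]]) simp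
  ultimately show ?case
    using Suc.IH by (simp add: openin_Int)
qed simp

lemma weak_sink_if_uniformly_attracting_nbhd:
  fixes S :: "'a::metric_space set"
  assumes f: "continuous_on S f" "f ` S \<subseteq> S" and "x \<in> S" and "nbhd_in S C x"
    and attract: "\<And>\<epsilon>. \<epsilon> > 0 \<Longrightarrow> \<exists>N. \<forall>n\<ge>N. \<forall>y\<in>C. dist ((f ^^ n) x) ((f ^^ n) y) < \<epsilon>"
  shows "weak_sink S f x"
  unfolding weak_sink_def
proof (intro allI impI)
  fix \<epsilon> :: real assume "\<epsilon> > 0"
  obtain U where U: "openin (top_of_set S) U" "x \<in> U" "U \<subseteq> C"
    using \<open>nbhd_in S C x\<close> by (auto simp: nbhd_in_def)
  obtain N where N: "\<forall>n\<ge>N. \<forall>y\<in>C. dist ((f ^^ n) x) ((f ^^ n) y) < \<epsilon>"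
    using attract \<open>\<epsilon> > 0\<close> by blast
  define Fin where "Fin = {y \<in> S. \<forall>n<N. dist ((f ^^ n) x) ((f ^^ n) y) < \<epsilon>}"
  have "U \<inter> Fin \<subseteq> local_stable_set S f \<epsilon> x"
  proof
    fix z assume z: "z \<in> U \<inter> Fin"
    have "dist ((f ^^ n) x) ((f ^^ n) z) \<le> \<epsilon>" for n
    proof (cases "n < N")
      case True
      then show ?thesis
        using z by (auto simp: Fin_def)
    next
      case False
      then show ?thesis
        using z U(3) N by (meson IntD1 less_imp_le not_le subsetD)
    qed
    then show "z \<in> local_stable_set S f \<epsilon> x"
      using z by (simp add: local_stable_set_def Fin_def)
  qed
  moreover have "openin (top_of_set S) (U \<inter> Fin)"
    unfolding Fin_def by (intro openin_Int U(1) openin_finite_time_stable_set f)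
  ultimately show "nbhd_in S (local_stable_set S f \<epsilon> x) x"
    using U(2) \<open>x \<in> S\<close> \<open>\<epsilon> > 0\<close> by (auto simp: nbhd_in_def Fin_def)
qed

lemma sink_if_uniformly_attracting_nbhd:
  fixes S :: "'a::metric_space set"
  assumes f: "continuous_on S f" "f ` S \<subseteq> S" and "x \<in> S" and "nbhd_in S C x"
    and attract: "\<And>\<epsilon>. \<epsilon> > 0 \<Longrightarrow> \<exists>N. \<forall>n\<ge>N. \<forall>y\<in>C. dist ((f ^^ n) x) ((f ^^ n) y) < \<epsilon>"
  shows "sink S f x"
proof -
  obtain U where U: "openin (top_of_set S) U" "x \<in> U" "U \<subseteq> C"
    using \<open>nbhd_in S C x\<close> by (auto simp: nbhd_in_def)
  then obtain e where "e > 0" "ball x e \<inter> S \<subseteq> U"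
    by (auto simp: openin_contains_ball)
  have "local_stable_set S f (e / 2) x \<subseteq> stable_set S f x"
  proof
    fix y assume y: "y \<in> local_stable_set S f (e / 2) x"
    then have "y \<in> S" "dist x y \<le> e / 2"
      by (auto simp: local_stable_set_def dest: spec[of _ 0])
    then have "y \<in> ball x e \<inter> S"
      using \<open>e > 0\<close> by simp
    then have "y \<in> C"
      using \<open>ball x e \<inter> S \<subseteq> U\<close> U(3) by blast
    have "(\<lambda>n. dist ((f ^^ n) x) ((f ^^ n) y)) \<longlonglongrightarrow> 0"
    proof (rule LIMSEQ_I)
      fix r :: real assume "r > 0"
      then obtain N where "\<forall>n\<ge>N. \<forall>y\<in>C. dist ((f ^^ n) x) ((f ^^ n) y) < r"
        using attract by blast
      then show "\<exists>N. \<forall>n\<ge>N. norm (dist ((f ^^ n) x) ((f ^^ n) y) - 0) < r"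
        using \<open>y \<in> C\<close> by auto
    qed
    then show "y \<in> stable_set S f x"
      using \<open>y \<in> S\<close> by (simp add: stable_set_def)
  qed
  then show ?thesis
    using weak_sink_if_uniformly_attracting_nbhd[OF assms] \<open>e > 0\<close>
    by (auto simp: sink_def intro!: exI[of _ "e / 2"])
qed

theorem mainTheorem5:
  fixes S :: "'a::metric_space set" and f g :: "'a \<Rightarrow> 'a" and \<alpha> :: real and x :: 'a
  assumes "peano_continuum S"
    and "homeomorphism S S f g"
    and "cw_expansive S f \<alpha>"
    and "x \<in> S"
  shows "sink S f x \<longleftrightarrow> nbhd_in S (cw_local_stable_set S f (\<alpha>/2) x) x"
proof -
  have "compact S" "locally connected S"
    using assms(1) by (auto simp: peano_continuum_def)
  have "\<alpha> > 0"
    using assms(3) by (simp add: cw_expansive_def)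
  define C where "C = cw_local_stable_set S f (\<alpha> / 2) x"
  show ?thesis
    unfolding C_def[symmetric]
  proof
    assume "sink S f x"
    then have "nbhd_in S (local_stable_set S f (\<alpha> / 2) x) x"
      using \<open>\<alpha> > 0\<close> by (simp add: sink_def weak_sink_def)
    then show "nbhd_in S C x"
      unfolding C_def cw_local_stable_set_def
      by (rule nbhd_in_connected_component[OF \<open>locally connected S\<close>])
  next
    assume "nbhd_in S C x"
    have "connected C" "x \<in> C" "C \<subseteq> local_stable_set S f (\<alpha> / 2) x"
      using assms(4) \<open>\<alpha> > 0\<close>
      by (auto simp: C_def cw_local_stable_set_def local_stable_set_def connected_component_subset)
    then show "sink S f x"
      using cw_expansive_stable_continuum_shrinks[OF \<open>compact S\<close> assms(2,3)]
      by (intro sink_if_uniformly_attracting_nbhd[OF homeomorphism_cont1[OF assms(2)] _ assms(4)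
          \<open>nbhd_in S C x\<close>]) (simp_all add: homeomorphism_image1[OF assms(2)])
  qed
qed

end
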